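(* Let $\mathbf{w}^t\in\mathbb{R}^d$, let $\theta_1^t\le\theta_2^t\le\dots\le\theta_{K-1}^t$ be real thresholds, let $\mathbf{x}^t\in\mathbb{R}^d$ and let $1\le y_l^t\le y_r^t\le K$ be integers. Let $(\mathbf{w}^{t+1},\boldsymbol\theta^{t+1})$ be the PA update, i.e. the unique minimizer over $\mathbf{w}\in\mathbb{R}^d,\boldsymbol\theta\in\mathbb{R}^{K-1}$ of $$\tfrac12\Vert\mathbf{w}-\mathbf{w}^t\Vert^2+\tfrac12\Vert\boldsymbol\theta-\boldsymbol\theta^t\Vert^2$$ subject to $\mathbf{w}\cdot\mathbf{x}^t-\theta_i\ge 1$ for $i=1,\dots,y_l^t-1$ and $\mathbf{w}\cdot\mathbf{x}^t-\theta_i\le -1$ for $i=y_r^t,\dots,K-1$. Then $\theta_1^{t+1}\le\theta_2^{t+1}\le\dots\le\theta_{K-1}^{t+1}$.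
   Context: Online ranking into $K$ ordered classes: a ranker is $(\mathbf{w},\boldsymbol\theta)$ with $\boldsymbol\theta=(\theta_1,\dots,\theta_{K-1})$, predicting $h(\mathbf{x})=\min\{i\in\{1,\dots,K\}:\mathbf{w}\cdot\mathbf{x}-\theta_i<0\}$ with $\theta_K=\infty$. At trial $t$ an example $\mathbf{x}^t$ with interval label $[y_l^t,y_r^t]$ is received and the passive-aggressive (PA) algorithm updates $(\mathbf{w}^t,\boldsymbol\theta^t)$ to the exact solution of the stated quadratic program. *)

theory Defs
  imports "HOL-Analysis.Analysis"
begin

text \<open>Thresholds theta_1..theta_{K-1} are represented as a function nat => real;
only the values at indices 1..K-1 are meaningful.\<close>

definition pa_feasible ::
  "nat \<Rightarrow> real^'d \<Rightarrow> nat \<Rightarrow> nat \<Rightarrow> real^'d \<Rightarrow> (nat \<Rightarrow> real) \<Rightarrow> bool" where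
  "pa_feasible K x yl yr w \<theta> \<longleftrightarrow>
     (\<forall>i. 1 \<le> i \<and> i \<le> yl - 1 \<longrightarrow> w \<bullet> x - \<theta> i \<ge> 1) \<and>
     (\<forall>i. yr \<le> i \<and> i \<le> K - 1 \<longrightarrow> w \<bullet> x - \<theta> i \<le> -1)"

definition pa_objective ::
  "nat \<Rightarrow> real^'d \<Rightarrow> (nat \<Rightarrow> real) \<Rightarrow> real^'d \<Rightarrow> (nat \<Rightarrow> real) \<Rightarrow> real" where
  "pa_objective K wt \<theta>t w \<theta> =
     (1/2) * (norm (w - wt))\<^sup>2 + (1/2) * (\<Sum>i=1..K-1. (\<theta> i - \<theta>t i)\<^sup>2)"

definition pa_update ::
  "nat \<Rightarrow> real^'d \<Rightarrow> (nat \<Rightarrow> real) \<Rightarrow> real^'d \<Rightarrow> nat \<Rightarrow> nat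
     \<Rightarrow> real^'d \<Rightarrow> (nat \<Rightarrow> real) \<Rightarrow> bool" where
  "pa_update K wt \<theta>t x yl yr w' \<theta>' \<longleftrightarrow>
     pa_feasible K x yl yr w' \<theta>' \<and>
     (\<forall>w \<theta>. pa_feasible K x yl yr w \<theta> \<longrightarrow>
        pa_objective K wt \<theta>t w' \<theta>' \<le> pa_objective K wt \<theta>t w \<theta>)"

end

theory Submission
  imports Defs
begin

text \<open>If two adjacent thresholds of the update were out of order, replace both by their mean.
  Every constraint on a single threshold is a one-sided bound (an upper bound for indices below
  the label interval, a lower bound for indices at or above it), and the upper-bounded indices
  come first; so the mean, which lies between the two values, is feasible at both positions.
  Since the old thresholds are ordered, the mean is strictly closer to them in the squared
  distance than the crossed pair, contradicting the minimality of the update.\<close>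

lemma sum_fun_upd:
  fixes f :: "'a \<Rightarrow> 'b::ab_group_add"
  assumes "finite A" "a \<in> A"
  shows "sum (f(a := v)) A = sum f A - f a + v"
proof -
  have "sum (f(a := v)) A = v + sum (f(a := v)) (A - {a})"
    using assms by (simp add: sum.remove)
  also have "\<dots> = v + sum f (A - {a})"
    by (intro arg_cong[where f = "(+) v"] sum.cong) auto
  also have "\<dots> = sum f A - f a + v"
    using assms by (simp add: sum_diff1)
  finally show ?thesis .
qed

lemma mean_sq_dist_less_crossed:
  fixes a b p q :: real
  assumes "b < a" "p \<le> q"
  shows "((a + b) / 2 - p)\<^sup>2 + ((a + b) / 2 - q)\<^sup>2 < (a - p)\<^sup>2 + (b - q)\<^sup>2"
proof -
  have "(a - p)\<^sup>2 + (b - q)\<^sup>2 - (((a + b) / 2 - p)\<^sup>2 + ((a + b) / 2 - q)\<^sup>2)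
      = (a - b) * (q - p) + (a - b)\<^sup>2 / 2"
    by (simp add: power2_eq_square field_simps)
  moreover have "(a - b) * (q - p) \<ge> 0" "(a - b)\<^sup>2 / 2 > 0"
    using assms by simp_all
  ultimately show ?thesis by linarith
qed

lemma pa_feasible_fun_upd_between:
  assumes feas: "pa_feasible K x yl yr w \<theta>"
    and i: "1 \<le> i" "i + 1 \<le> K - 1"
    and m: "\<theta> (i + 1) \<le> m" "m \<le> \<theta> i"
  shows "pa_feasible K x yl yr w (\<theta>(i := m, i + 1 := m))"
proof -
  have lo: "\<And>j. 1 \<le> j \<Longrightarrow> j \<le> yl - 1 \<Longrightarrow> \<theta> j \<le> w \<bullet> x - 1"
    and hi: "\<And>j. yr \<le> j \<Longrightarrow> j \<le> K - 1 \<Longrightarrow> \<theta> j \<ge> w \<bullet> x + 1"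
    using feas unfolding pa_feasible_def by force+
  show ?thesis
    unfolding pa_feasible_def
  proof (intro conjI allI impI)
    fix j assume j: "1 \<le> j \<and> j \<le> yl - 1"
    have "(\<theta>(i := m, i + 1 := m)) j \<le> w \<bullet> x - 1"
    proof (cases "j = i \<or> j = i + 1")
      case True
      then have "i \<le> yl - 1" using j by auto
      then have "m \<le> w \<bullet> x - 1" using lo[of i] i m by linarith
      then show ?thesis using True by auto
    next
      case False
      then show ?thesis using lo j by simp
    qed
    then show "w \<bullet> x - (\<theta>(i := m, i + 1 := m)) j \<ge> 1" by simp
  next
    fix j assume j: "yr \<le> j \<and> j \<le> K - 1"
    have "(\<theta>(i := m, i + 1 := m)) j \<ge> w \<bullet> x + 1"
    proof (cases "j = i \<or> j = i + 1")
      case True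
      then have "yr \<le> i + 1" using j by auto
      then have "m \<ge> w \<bullet> x + 1" using hi[of "i + 1"] i m by linarith
      then show ?thesis using True by auto
    next
      case False
      then show ?thesis using hi j by simp
    qed
    then show "w \<bullet> x - (\<theta>(i := m, i + 1 := m)) j \<le> -1" by simp
  qed
qed

lemma pa_objective_fun_upd2:
  assumes "1 \<le> i" "i + 1 \<le> K - 1"
  shows "pa_objective K wt \<theta>t w (\<theta>(i := u, i + 1 := v)) = pa_objective K wt \<theta>t w \<theta>
    + ((u - \<theta>t i)\<^sup>2 + (v - \<theta>t (i + 1))\<^sup>2 - (\<theta> i - \<theta>t i)\<^sup>2 - (\<theta> (i + 1) - \<theta>t (i + 1))\<^sup>2) / 2"
proof -
  define g where "g = (\<lambda>j. (\<theta> j - \<theta>t j)\<^sup>2)"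
  define u' v' where "u' = (u - \<theta>t i)\<^sup>2" and "v' = (v - \<theta>t (i + 1))\<^sup>2"
  have idx: "finite {1..K - 1}" "i \<in> {1..K - 1}" "i + 1 \<in> {1..K - 1}"
    using assms by auto
  have upd: "(\<lambda>j. ((\<theta>(i := u, i + 1 := v)) j - \<theta>t j)\<^sup>2) = g(i := u', i + 1 := v')"
    by (auto simp: g_def u'_def v'_def fun_eq_iff)
  have "sum (g(i := u', i + 1 := v')) {1..K - 1} = sum g {1..K - 1} - g i + u' - g (i + 1) + v'"
    using sum_fun_upd[OF idx(1,3), of "g(i := u')" v'] sum_fun_upd[OF idx(1,2), of g u'] by simp
  then show ?thesis
    unfolding pa_objective_def upd by (simp add: g_def u'_def v'_def field_simps)
qed

theorem theorem1:
  fixes K yl yr :: nat and wt x w' :: "real^'d" and \<theta>t \<theta>' :: "nat \<Rightarrow> real"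
  assumes mono: "\<And>i. 1 \<le> i \<Longrightarrow> i + 1 \<le> K - 1 \<Longrightarrow> \<theta>t i \<le> \<theta>t (i + 1)"
    and lab: "1 \<le> yl" "yl \<le> yr" "yr \<le> K"
    and upd: "pa_update K wt \<theta>t x yl yr w' \<theta>'"
  shows "\<forall>i. 1 \<le> i \<and> i + 1 \<le> K - 1 \<longrightarrow> \<theta>' i \<le> \<theta>' (i + 1)"
proof (intro allI impI, rule ccontr)
  fix i assume "1 \<le> i \<and> i + 1 \<le> K - 1" and "\<not> \<theta>' i \<le> \<theta>' (i + 1)"
  then have i: "1 \<le> i" "i + 1 \<le> K - 1" and crossed: "\<theta>' (i + 1) < \<theta>' i" by auto
  define m where "m = (\<theta>' i + \<theta>' (i + 1)) / 2"
  have feas: "pa_feasible K x yl yr w' \<theta>'"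
    and opt: "\<And>w \<theta>. pa_feasible K x yl yr w \<theta> \<Longrightarrow>
      pa_objective K wt \<theta>t w' \<theta>' \<le> pa_objective K wt \<theta>t w \<theta>"
    using upd unfolding pa_update_def by auto
  have "pa_feasible K x yl yr w' (\<theta>'(i := m, i + 1 := m))"
    using pa_feasible_fun_upd_between[OF feas] i crossed by (simp add: m_def)
  moreover have "pa_objective K wt \<theta>t w' (\<theta>'(i := m, i + 1 := m)) < pa_objective K wt \<theta>t w' \<theta>'"
    using pa_objective_fun_upd2[OF i, of wt \<theta>t w' \<theta>' m m]
      mean_sq_dist_less_crossed[OF crossed mono[OF i], folded m_def]
    by (simp add: field_simps)
  ultimately show False
    using opt by fastforce
qed

end
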